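(* Let $X,Y$ be non-empty subsets of $A^+$. The following are equivalent: (i) $XY$ is a strong alt-induced code; (ii) $(X,Y)$ is a strong alternative code; (iii) $X$ is a prefix code, $Y$ is a suffix code, and $XY$ is a code.
   Context: $A$ is a finite alphabet, $A^*$ the set of words, $A^+$ the non-empty words, $XY=\{xy:x\in X,y\in Y\}$. For $X,Z\subseteq A^*$: $X^{-1}Z=\{u\in A^*: xu\in Z \text{ for some } x\in X\}$ and $ZY^{-1}=\{u\in A^*: uy\in Z\text{ for some } y\in Y\}$. A code is a subset of $A^+$ in which every word has at most one factorization into its elements. A prefix (suffix) code is a subset of $A^+$ in which no word is a proper prefix (suffix) of another. For non-empty $X,Y\subseteq A^+$, $(X,Y)$ is an alternative code if no word of $A^+$ admits two different similar alternative factorizations on $(X,Y)$ (factorizations $u_1\cdots u_n$, $n\ge2$, $u_i\in X\cup Y$, alternating between $X$ and $Y$; similar = beginning in the same set and ending in the same set); equivalently, $XY$ is a code and each element of $XY$ has exactly one factorization $xy$ with $x\in X,y\in Y$. An alternative code $(X,Y)$ is a strong alternative code if $X^{-1}(XY)\subseteq Y$ and $(XY)Y^{-1}\subseteq X$. A set $Z$ is a strong alt-induced code if $Z=XY$ for some strong alternative code $(X,Y)$. In (i), "$XY$ is a strong alt-induced code" is understood as in the paper, namely via this particular pair $(X,Y)$: $XY$ is a strong alt-induced code generated by $(X,Y)$. *)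

theory Defs
  imports Main
begin

text \<open>Words over the alphabet 'a are lists; A^+ is the set of non-empty lists.\<close>

definition conc :: "'a list set \<Rightarrow> 'a list set \<Rightarrow> 'a list set" where
  "conc X Y = {x @ y | x y. x \<in> X \<and> y \<in> Y}"

definition left_quot :: "'a list set \<Rightarrow> 'a list set \<Rightarrow> 'a list set" where
  "left_quot X Z = {u. \<exists>x\<in>X. x @ u \<in> Z}"

definition right_quot :: "'a list set \<Rightarrow> 'a list set \<Rightarrow> 'a list set" where
  "right_quot Z Y = {u. \<exists>y\<in>Y. u @ y \<in> Z}"

definition nonempty_words :: "'a list set \<Rightarrow> bool" where
  "nonempty_words X \<longleftrightarrow> [] \<notin> X"

definition is_code :: "'a list set \<Rightarrow> bool" where
  "is_code C \<longleftrightarrow> [] \<notin> C \<and>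
     (\<forall>us vs. set us \<subseteq> C \<longrightarrow> set vs \<subseteq> C \<longrightarrow> concat us = concat vs \<longrightarrow> us = vs)"

definition prefix_code :: "'a list set \<Rightarrow> bool" where
  "prefix_code C \<longleftrightarrow> [] \<notin> C \<and> (\<forall>u\<in>C. \<forall>v\<in>C. \<forall>w. v = u @ w \<longrightarrow> w = [])"

definition suffix_code :: "'a list set \<Rightarrow> bool" where
  "suffix_code C \<longleftrightarrow> [] \<notin> C \<and> (\<forall>u\<in>C. \<forall>v\<in>C. \<forall>w. v = w @ u \<longrightarrow> w = [])"

text \<open>An alternative factorization on (X,Y): a list of tagged factors, tag True meaning
  the factor is taken from X and False meaning it is taken from Y; at least two factors,
  with consecutive tags alternating.\<close>

definition alt_fact :: "'a list set \<Rightarrow> 'a list set \<Rightarrow> (bool \<times> 'a list) list \<Rightarrow> bool" where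
  "alt_fact X Y fs \<longleftrightarrow> length fs \<ge> 2 \<and>
     (\<forall>(b, u) \<in> set fs. if b then u \<in> X else u \<in> Y) \<and>
     (\<forall>i. Suc i < length fs \<longrightarrow> fst (fs ! i) \<noteq> fst (fs ! Suc i))"

definition similar :: "(bool \<times> 'a list) list \<Rightarrow> (bool \<times> 'a list) list \<Rightarrow> bool" where
  "similar fs gs \<longleftrightarrow> fst (hd fs) = fst (hd gs) \<and> fst (last fs) = fst (last gs)"

definition alt_code :: "'a list set \<Rightarrow> 'a list set \<Rightarrow> bool" where
  "alt_code X Y \<longleftrightarrow> X \<noteq> {} \<and> Y \<noteq> {} \<and> [] \<notin> X \<and> [] \<notin> Y \<and>
     (\<forall>fs gs. alt_fact X Y fs \<longrightarrow> alt_fact X Y gs \<longrightarrow> similar fs gs \<longrightarrow>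
        concat (map snd fs) = concat (map snd gs) \<longrightarrow> fs = gs)"

definition strong_alt_code :: "'a list set \<Rightarrow> 'a list set \<Rightarrow> bool" where
  "strong_alt_code X Y \<longleftrightarrow> alt_code X Y \<and>
     left_quot X (conc X Y) \<subseteq> Y \<and> right_quot (conc X Y) Y \<subseteq> X"

definition strong_alt_induced_by :: "'a list set \<Rightarrow> 'a list set \<Rightarrow> 'a list set \<Rightarrow> bool" where
  "strong_alt_induced_by Z X Y \<longleftrightarrow> Z = conc X Y \<and> strong_alt_code X Y"

end

theory Submission
  imports Defs
begin

text \<open>An alternative factorization of a word in \<open>(XY)\<^sup>+\<close> that begins in \<open>X\<close> and ends in \<open>Y\<close> is
  the same thing as a sequence of words of \<open>XY\<close>, each split as \<open>xy\<close>. Padding an arbitrary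
  alternative factorization with a fixed \<open>x\<^sub>0 \<in> X\<close> in front and \<open>y\<^sub>0 \<in> Y\<close> at the end (where
  needed) therefore reduces uniqueness of similar alternative factorizations to \<open>XY\<close> being a
  code whose elements split uniquely as \<open>xy\<close>; unique splitting is where \<open>X\<close> being a prefix
  code enters.
  Finally, the quotient conditions \<open>X\<^sup>-\<^sup>1(XY) \<subseteq> Y\<close> and \<open>(XY)Y\<^sup>-\<^sup>1 \<subseteq> X\<close> follow from \<open>X\<close> being a
  prefix code and \<open>Y\<close> a suffix code, and conversely force them: if \<open>v = uw\<close> with \<open>u, v \<in> X\<close>,
  then \<open>wy \<in> Y\<close>, and \<open>u\<cdot>wy = v\<cdot>y\<close> are two similar alternative factorizations.\<close>

fun alternating :: "(bool \<times> 'b) list \<Rightarrow> bool" where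
  "alternating (a # b # r) \<longleftrightarrow> fst a \<noteq> fst b \<and> alternating (b # r)"
| "alternating _ \<longleftrightarrow> True"

lemma alternating_iff_nth:
  "alternating fs \<longleftrightarrow> (\<forall>i. Suc i < length fs \<longrightarrow> fst (fs ! i) \<noteq> fst (fs ! Suc i))"
proof (induction fs rule: alternating.induct)
  case (1 a b r)
  have "(\<forall>i. Suc i < length (a # b # r) \<longrightarrow> fst ((a # b # r) ! i) \<noteq> fst ((a # b # r) ! Suc i))
    \<longleftrightarrow> fst a \<noteq> fst b \<and>
        (\<forall>i. Suc i < length (b # r) \<longrightarrow> fst ((b # r) ! i) \<noteq> fst ((b # r) ! Suc i))"
    by (auto simp: All_less_Suc2 simp del: length_Cons)
  with 1 show ?case by simp
qed auto

lemma alternating_Cons: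
  "alternating (a # fs) \<longleftrightarrow> (fs = [] \<or> fst a \<noteq> fst (hd fs)) \<and> alternating fs"
  by (cases fs) auto

lemma alternating_snoc:
  "alternating (fs @ [a]) \<longleftrightarrow> (fs = [] \<or> fst (last fs) \<noteq> fst a) \<and> alternating fs"
  by (induction fs rule: alternating.induct) auto

lemma alt_fact_iff_alternating:
  "alt_fact X Y fs \<longleftrightarrow> length fs \<ge> 2 \<and> (\<forall>(b, u) \<in> set fs. if b then u \<in> X else u \<in> Y)
     \<and> alternating fs"
  by (simp add: alt_fact_def alternating_iff_nth)

lemma append_in_conc: "x \<in> X \<Longrightarrow> y \<in> Y \<Longrightarrow> x @ y \<in> conc X Y"
  by (auto simp: conc_def)

inductive xy_factorization :: "'a list set \<Rightarrow> 'a list set \<Rightarrow> (bool \<times> 'a list) list \<Rightarrow> bool"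
  for X Y where
  Nil: "xy_factorization X Y []"
| Cons: "x \<in> X \<Longrightarrow> y \<in> Y \<Longrightarrow> xy_factorization X Y fs \<Longrightarrow>
    xy_factorization X Y ((True, x) # (False, y) # fs)"

fun pair_up :: "('b \<times> 'a list) list \<Rightarrow> 'a list list" where
  "pair_up (a # b # r) = (snd a @ snd b) # pair_up r"
| "pair_up _ = []"

lemma concat_pair_up:
  "xy_factorization X Y fs \<Longrightarrow> concat (pair_up fs) = concat (map snd fs)"
  by (induction rule: xy_factorization.induct) auto

lemma set_pair_up_subset_conc:
  "xy_factorization X Y fs \<Longrightarrow> set (pair_up fs) \<subseteq> conc X Y"
  by (induction rule: xy_factorization.induct) (auto simp: append_in_conc)

lemma pair_up_Nil_iff: "xy_factorization X Y fs \<Longrightarrow> pair_up fs = [] \<longleftrightarrow> fs = []"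
  by (cases rule: xy_factorization.cases) auto

lemma exists_xy_factorization:
  "set us \<subseteq> conc X Y \<Longrightarrow> \<exists>fs. xy_factorization X Y fs \<and> pair_up fs = us"
proof (induction us)
  case Nil
  show ?case using xy_factorization.Nil by fastforce
next
  case (Cons u us)
  then obtain fs where "xy_factorization X Y fs" "pair_up fs = us" by auto
  moreover obtain x y where "x \<in> X" "y \<in> Y" "u = x @ y"
    using Cons.prems by (auto simp: conc_def)
  ultimately show ?case
    by (metis pair_up.simps(1) snd_conv xy_factorization.Cons)
qed

lemma prefix_code_append_eq_append:
  assumes "prefix_code X" "x \<in> X" "x' \<in> X" "x @ w = x' @ w'"
  shows "x = x' \<and> w = w'"
proof -
  obtain s where "x = x' @ s \<and> s @ w = w' \<or> x @ s = x' \<and> w = s @ w'"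
    using assms(4) by (auto simp: append_eq_append_conv2)
  with assms(1-3) show ?thesis by (auto simp: prefix_code_def)
qed

lemma suffix_code_append_eq_append:
  assumes "suffix_code Y" "y \<in> Y" "y' \<in> Y" "w @ y = w' @ y'"
  shows "y = y' \<and> w = w'"
proof -
  obtain s where "w = w' @ s \<and> s @ y = y' \<or> w @ s = w' \<and> y = s @ y'"
    using assms(4) by (auto simp: append_eq_append_conv2)
  with assms(1-3) show ?thesis by (auto simp: suffix_code_def)
qed

lemma pair_up_inj:
  assumes "prefix_code X" "xy_factorization X Y fs" "xy_factorization X Y gs"
    and "pair_up fs = pair_up gs"
  shows "fs = gs"
  using assms(2-4)
proof (induction arbitrary: gs rule: xy_factorization.induct)
  case Nil
  then show ?case using pair_up_Nil_iff[of X Y gs] by simp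
next
  case (Cons x y fs)
  from Cons.prems(1) show ?case
  proof (cases rule: xy_factorization.cases)
    case Nil
    with Cons.prems show ?thesis by simp
  next
    case (Cons x' y' gs')
    with Cons.prems have "x @ y = x' @ y'" "pair_up fs = pair_up gs'" by auto
    with prefix_code_append_eq_append[OF assms(1) \<open>x \<in> X\<close> \<open>x' \<in> X\<close>] Cons.IH Cons
    show ?thesis by simp
  qed
qed

lemma xy_factorization_alt_fact:
  assumes "xy_factorization X Y fs" "fs \<noteq> []"
  shows "alt_fact X Y fs \<and> fst (hd fs) \<and> \<not> fst (last fs)"
proof -
  have "alternating fs \<and> (\<forall>(b, u) \<in> set fs. if b then u \<in> X else u \<in> Y) \<and>
    (fs \<noteq> [] \<longrightarrow> fst (hd fs) \<and> \<not> fst (last fs) \<and> length fs \<ge> 2)"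
    using assms(1) by induction (auto simp: neq_Nil_conv)
  with assms(2) show ?thesis by (simp add: alt_fact_iff_alternating)
qed

lemma xy_factorization_if_alternating:
  "alternating fs \<Longrightarrow> \<forall>(b, u) \<in> set fs. if b then u \<in> X else u \<in> Y \<Longrightarrow>
    fs \<noteq> [] \<longrightarrow> fst (hd fs) \<and> \<not> fst (last fs) \<Longrightarrow> xy_factorization X Y fs"
proof (induction fs rule: pair_up.induct)
  case (1 a b r)
  have "xy_factorization X Y r"
    using 1 by (intro "1.IH") (auto simp: alternating_Cons)
  with 1 show ?case
    by (cases a, cases b) (auto intro: xy_factorization.Cons)
qed (auto intro: xy_factorization.Nil)

lemma alt_code_unique:
  "alt_code X Y \<Longrightarrow> alt_fact X Y fs \<Longrightarrow> alt_fact X Y gs \<Longrightarrow> similar fs gs \<Longrightarrow>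
    concat (map snd fs) = concat (map snd gs) \<Longrightarrow> fs = gs"
  by (simp add: alt_code_def)

lemma alt_fact_pair: "x \<in> X \<Longrightarrow> y \<in> Y \<Longrightarrow> alt_fact X Y [(True, x), (False, y)]"
  by (auto simp: alt_fact_def less_Suc_eq)

lemma strong_alt_code_prefix_code:
  assumes "strong_alt_code X Y"
  shows "prefix_code X"
  unfolding prefix_code_def
proof (intro conjI ballI allI impI)
  have ac: "alt_code X Y" and lq: "left_quot X (conc X Y) \<subseteq> Y"
    using assms by (auto simp: strong_alt_code_def)
  then show "[] \<notin> X" by (simp add: alt_code_def)
  fix u v w assume u: "u \<in> X" and v: "v \<in> X" and vw: "v = u @ w"
  obtain y where y: "y \<in> Y" using ac by (auto simp: alt_code_def)
  have "u @ w @ y \<in> conc X Y" using append_in_conc[OF v y] vw by simp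
  then have "w @ y \<in> Y" using lq u by (auto simp: left_quot_def)
  then have "[(True, u), (False, w @ y)] = [(True, v), (False, y)]"
    using alt_code_unique[OF ac alt_fact_pair[OF u] alt_fact_pair[OF v y]] vw
    by (simp add: similar_def)
  then show "w = []" using vw by simp
qed

lemma strong_alt_code_suffix_code:
  assumes "strong_alt_code X Y"
  shows "suffix_code Y"
  unfolding suffix_code_def
proof (intro conjI ballI allI impI)
  have ac: "alt_code X Y" and rq: "right_quot (conc X Y) Y \<subseteq> X"
    using assms by (auto simp: strong_alt_code_def)
  then show "[] \<notin> Y" by (simp add: alt_code_def)
  fix u v w assume u: "u \<in> Y" and v: "v \<in> Y" and vw: "v = w @ u"
  obtain x where x: "x \<in> X" using ac by (auto simp: alt_code_def)
  have "(x @ w) @ u \<in> conc X Y" using append_in_conc[OF x v] vw by simp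
  then have "x @ w \<in> X" using rq u unfolding right_quot_def by blast
  then have "[(True, x @ w), (False, u)] = [(True, x), (False, v)]"
    using alt_code_unique[OF ac alt_fact_pair[OF _ u] alt_fact_pair[OF x v]] vw
    by (simp add: similar_def)
  then show "w = []" by simp
qed

lemma concat_eq_Nil_in: "concat vs = [] \<Longrightarrow> set vs \<subseteq> C \<Longrightarrow> [] \<notin> C \<Longrightarrow> vs = []"
  by (cases vs) auto

lemma alt_code_is_code_conc:
  assumes ac: "alt_code X Y"
  shows "is_code (conc X Y)"
  unfolding is_code_def
proof (intro conjI allI impI)
  show nil: "[] \<notin> conc X Y" using ac by (auto simp: alt_code_def conc_def)
  fix us vs assume us: "set us \<subseteq> conc X Y" and vs: "set vs \<subseteq> conc X Y"
    and eq: "concat us = concat vs"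
  show "us = vs"
  proof (cases "us = [] \<or> vs = []")
    case True
    with eq us vs nil show ?thesis by (metis concat.simps(1) concat_eq_Nil_in)
  next
    case False
    obtain fs gs where fs: "xy_factorization X Y fs" "pair_up fs = us"
      and gs: "xy_factorization X Y gs" "pair_up gs = vs"
      using exists_xy_factorization[OF us] exists_xy_factorization[OF vs] by blast
    with False have "fs \<noteq> []" "gs \<noteq> []" by auto
    with fs gs have "alt_fact X Y fs" "alt_fact X Y gs" "similar fs gs"
      using xy_factorization_alt_fact by (auto simp: similar_def)
    moreover have "concat (map snd fs) = concat (map snd gs)"
      using eq fs gs concat_pair_up by metis
    ultimately have "fs = gs" using alt_code_unique[OF ac] by blast
    with fs gs show ?thesis by simp
  qed
qed

lemma prefix_code_left_quot_conc:
  assumes "prefix_code X"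
  shows "left_quot X (conc X Y) \<subseteq> Y"
proof
  fix u assume "u \<in> left_quot X (conc X Y)"
  then obtain x x' y where "x \<in> X" "x' \<in> X" "y \<in> Y" "x @ u = x' @ y"
    by (auto simp: left_quot_def conc_def)
  with prefix_code_append_eq_append[OF assms] show "u \<in> Y" by metis
qed

lemma suffix_code_right_quot_conc:
  assumes "suffix_code Y"
  shows "right_quot (conc X Y) Y \<subseteq> X"
proof
  fix u assume "u \<in> right_quot (conc X Y) Y"
  then obtain x y y' where "x \<in> X" "y \<in> Y" "y' \<in> Y" "u @ y' = x @ y"
    by (auto simp: right_quot_def conc_def)
  with suffix_code_append_eq_append[OF assms] show "u \<in> X" by metis
qed

definition pad :: "'a list \<Rightarrow> 'a list \<Rightarrow> (bool \<times> 'a list) list \<Rightarrow> (bool \<times> 'a list) list" where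
  "pad x y fs = (if fst (hd fs) then [] else [(True, x)]) @ fs @
     (if fst (last fs) then [(False, y)] else [])"

lemma concat_map_snd_pad:
  "concat (map snd (pad x y fs)) = (if fst (hd fs) then [] else x) @ concat (map snd fs) @
     (if fst (last fs) then y else [])"
  by (simp add: pad_def)

lemma xy_factorization_pad:
  assumes "x \<in> X" "y \<in> Y" "alt_fact X Y fs"
  shows "xy_factorization X Y (pad x y fs)"
proof (rule xy_factorization_if_alternating)
  have "fs \<noteq> []" "alternating fs" "\<forall>(b, u) \<in> set fs. if b then u \<in> X else u \<in> Y"
    using assms(3) by (auto simp: alt_fact_iff_alternating)
  with assms(1,2) show "alternating (pad x y fs)"
    "\<forall>(b, u) \<in> set (pad x y fs). if b then u \<in> X else u \<in> Y"
    "pad x y fs \<noteq> [] \<longrightarrow> fst (hd (pad x y fs)) \<and> \<not> fst (last (pad x y fs))"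
    by (auto simp: pad_def alternating_Cons alternating_snoc)
qed

lemma pad_eq_imp_eq: "pad x y fs = pad x y gs \<Longrightarrow> similar fs gs \<Longrightarrow> fs = gs"
  by (simp add: pad_def similar_def)

lemma alt_code_if_prefix_code_is_code_conc:
  assumes ne: "X \<noteq> {}" "Y \<noteq> {}" "[] \<notin> X" "[] \<notin> Y"
    and pc: "prefix_code X" and ic: "is_code (conc X Y)"
  shows "alt_code X Y"
  unfolding alt_code_def
proof (intro conjI allI impI)
  obtain x y where x: "x \<in> X" and y: "y \<in> Y" using ne by auto
  fix fs gs assume af: "alt_fact X Y fs" and ag: "alt_fact X Y gs" and sim: "similar fs gs"
    and eq: "concat (map snd fs) = concat (map snd gs)"
  have xf: "xy_factorization X Y (pad x y fs)" and xg: "xy_factorization X Y (pad x y gs)"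
    using xy_factorization_pad[OF x y] af ag by auto
  have "concat (map snd (pad x y fs)) = concat (map snd (pad x y gs))"
    using sim eq by (simp add: concat_map_snd_pad similar_def)
  then have "concat (pair_up (pad x y fs)) = concat (pair_up (pad x y gs))"
    by (simp add: concat_pair_up[OF xf] concat_pair_up[OF xg])
  then have "pair_up (pad x y fs) = pair_up (pad x y gs)"
    using ic set_pair_up_subset_conc[OF xf] set_pair_up_subset_conc[OF xg]
    by (simp add: is_code_def)
  with pair_up_inj[OF pc xf xg] sim show "fs = gs" by (simp add: pad_eq_imp_eq)
qed (use ne in auto)

theorem theoremT:
  fixes X Y :: "('a::finite) list set"
  assumes "X \<noteq> {}" and "Y \<noteq> {}" and "[] \<notin> X" and "[] \<notin> Y"
  shows "(strong_alt_induced_by (conc X Y) X Y \<longleftrightarrow> strong_alt_code X Y)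
       \<and> (strong_alt_code X Y \<longleftrightarrow> (prefix_code X \<and> suffix_code Y \<and> is_code (conc X Y)))"
proof -
  have "strong_alt_code X Y"
    if "prefix_code X" "suffix_code Y" "is_code (conc X Y)"
    using that alt_code_if_prefix_code_is_code_conc[OF assms]
      prefix_code_left_quot_conc[of X Y] suffix_code_right_quot_conc[of Y X]
    by (simp add: strong_alt_code_def)
  moreover have "prefix_code X \<and> suffix_code Y \<and> is_code (conc X Y)"
    if "strong_alt_code X Y"
    using that strong_alt_code_prefix_code strong_alt_code_suffix_code
      alt_code_is_code_conc by (auto simp: strong_alt_code_def)
  ultimately show ?thesis by (auto simp: strong_alt_induced_by_def)
qed

end
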